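(* Fix a monomial order on $S$. Let $J,E,E'$ be ideals of $S$ and $\mathcal G_J$ a Gröbner basis of $J$, and assume $E$ and $E'$ are S-nice with respect to $\mathcal G_J$. Then $(J+E)\cap(J+E')=J+(E\cap E')$ if and only if $\mathrm{in}((J+E)\cap(J+E'))=\mathrm{in}(J)+\mathrm{in}(E\cap E')$.
   Context: $K$ is a field and $S=K[x_1,\ldots,x_n]$ with a fixed monomial order. For $0\neq f\in S$, $\mathrm{in}(f)$ denotes its leading monomial and $\mathrm{LT}(f)$ its leading term; for an ideal $I$, $\mathrm{in}(I)$ is the ideal generated by the leading monomials of the nonzero elements of $I$. For nonzero $f,g\in S$ the S-polynomial is $S(f,g)=\frac{\mathrm{lcm}(\mathrm{in}(f),\mathrm{in}(g))}{\mathrm{LT}(f)}f-\frac{\mathrm{lcm}(\mathrm{in}(f),\mathrm{in}(g))}{\mathrm{LT}(g)}g$. Given a Gröbner basis $\mathcal G_J$ of an ideal $J$, an ideal $E$ is called S-nice with respect to $\mathcal G_J$ if $S(f,g)\in E$ for all $f\in\mathcal G_J$ and all nonzero $g\in E$. *)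

theory Defs
  imports "HOL-Library.Poly_Mapping"
begin

text \<open>Polynomial ring S = K[x_v : v in 'v] with 'v a finite type of variables.\<close>

type_synonym ('v, 'a) mpoly = "('v \<Rightarrow>\<^sub>0 nat) \<Rightarrow>\<^sub>0 'a"

definition monomial_order :: "(('v \<Rightarrow>\<^sub>0 nat) \<Rightarrow> ('v \<Rightarrow>\<^sub>0 nat) \<Rightarrow> bool) \<Rightarrow> bool" where
  "monomial_order ord \<longleftrightarrow>
     (\<forall>a. ord a a) \<and>
     (\<forall>a b. ord a b \<and> ord b a \<longrightarrow> a = b) \<and>
     (\<forall>a b c. ord a b \<and> ord b c \<longrightarrow> ord a c) \<and>
     (\<forall>a b. ord a b \<or> ord b a) \<and>
     (\<forall>a. ord 0 a) \<and>
     (\<forall>a b c. ord a b \<longrightarrow> ord (a + c) (b + c))"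

definition is_ideal :: "('v, 'a::comm_ring_1) mpoly set \<Rightarrow> bool" where
  "is_ideal I \<longleftrightarrow> 0 \<in> I \<and> (\<forall>f\<in>I. \<forall>g\<in>I. f + g \<in> I) \<and> (\<forall>s. \<forall>f\<in>I. s * f \<in> I)"

definition ideal_gen :: "('v, 'a::comm_ring_1) mpoly set \<Rightarrow> ('v, 'a) mpoly set" where
  "ideal_gen A = \<Inter>{I. is_ideal I \<and> A \<subseteq> I}"

definition ideal_sum :: "('v, 'a::comm_ring_1) mpoly set \<Rightarrow> ('v, 'a) mpoly set \<Rightarrow> ('v, 'a) mpoly set" where
  "ideal_sum I J = {f + g | f g. f \<in> I \<and> g \<in> J}"

definition lm :: "(('v \<Rightarrow>\<^sub>0 nat) \<Rightarrow> ('v \<Rightarrow>\<^sub>0 nat) \<Rightarrow> bool) \<Rightarrow> ('v, 'a::zero) mpoly \<Rightarrow> ('v \<Rightarrow>\<^sub>0 nat)" where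
  "lm ord f = (THE m. m \<in> Poly_Mapping.keys f \<and> (\<forall>m'\<in>Poly_Mapping.keys f. ord m' m))"

definition lc :: "(('v \<Rightarrow>\<^sub>0 nat) \<Rightarrow> ('v \<Rightarrow>\<^sub>0 nat) \<Rightarrow> bool) \<Rightarrow> ('v, 'a::zero) mpoly \<Rightarrow> 'a" where
  "lc ord f = Poly_Mapping.lookup f (lm ord f)"

definition monom :: "('v \<Rightarrow>\<^sub>0 nat) \<Rightarrow> ('v, 'a::{zero,one}) mpoly" where
  "monom m = Poly_Mapping.single m 1"

definition init_ideal :: "(('v \<Rightarrow>\<^sub>0 nat) \<Rightarrow> ('v \<Rightarrow>\<^sub>0 nat) \<Rightarrow> bool) \<Rightarrow> ('v, 'a::comm_ring_1) mpoly set \<Rightarrow> ('v, 'a) mpoly set" where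
  "init_ideal ord I = ideal_gen {monom (lm ord f) | f. f \<in> I \<and> f \<noteq> 0}"

definition groebner_basis :: "(('v \<Rightarrow>\<^sub>0 nat) \<Rightarrow> ('v \<Rightarrow>\<^sub>0 nat) \<Rightarrow> bool) \<Rightarrow> ('v, 'a::comm_ring_1) mpoly set \<Rightarrow> ('v, 'a) mpoly set \<Rightarrow> bool" where
  "groebner_basis ord G I \<longleftrightarrow> finite G \<and> G \<subseteq> I \<and> 0 \<notin> G \<and>
     init_ideal ord I = ideal_gen {monom (lm ord g) | g. g \<in> G}"

text \<open>lcm of monomials: a + (b - a) is the componentwise max.\<close>
definition mon_lcm :: "('v \<Rightarrow>\<^sub>0 nat) \<Rightarrow> ('v \<Rightarrow>\<^sub>0 nat) \<Rightarrow> ('v \<Rightarrow>\<^sub>0 nat)" where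
  "mon_lcm a b = a + (b - a)"

definition spoly :: "(('v \<Rightarrow>\<^sub>0 nat) \<Rightarrow> ('v \<Rightarrow>\<^sub>0 nat) \<Rightarrow> bool) \<Rightarrow> ('v, 'a::field) mpoly \<Rightarrow> ('v, 'a) mpoly \<Rightarrow> ('v, 'a) mpoly" where
  "spoly ord f g =
     (let L = mon_lcm (lm ord f) (lm ord g) in
        Poly_Mapping.single (L - lm ord f) (inverse (lc ord f)) * f
      - Poly_Mapping.single (L - lm ord g) (inverse (lc ord g)) * g)"

definition S_nice :: "(('v \<Rightarrow>\<^sub>0 nat) \<Rightarrow> ('v \<Rightarrow>\<^sub>0 nat) \<Rightarrow> bool) \<Rightarrow> ('v, 'a::field) mpoly set \<Rightarrow> ('v, 'a) mpoly set \<Rightarrow> bool" where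
  "S_nice ord G E \<longleftrightarrow> (\<forall>f\<in>G. \<forall>g\<in>E. g \<noteq> 0 \<longrightarrow> spoly ord f g \<in> E)"

end

(* Put D = E \<inter> E'. It is again S-nice, and J + D \<subseteq> (J + E) \<inter> (J + E').
   S-niceness lets one cancel the leading term of an element of D against a multiple of
   an element of the Groebner basis without leaving D; iterating, every e \<in> D is j + e'
   with j \<in> J and in(e') divisible by no in(g), g \<in> G. In the sum of such j and e' the
   leading monomials cannot cancel, whence in(J + D) = in(J) + in(D). The theorem follows
   because ideals I \<subseteq> I' with in(I') \<subseteq> in(I) coincide: an element of I' - I with
   minimal leading monomial could be reduced by an element of I, and minimality makes
   sense since a monomial order is a well-order (Dickson's lemma). *)

theory Submission
  imports Defs Complex_Main
begin

section \<open>Monomial orders and leading monomials\<close>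

locale monomial_ord =
  fixes ord :: "('v \<Rightarrow>\<^sub>0 nat) \<Rightarrow> ('v \<Rightarrow>\<^sub>0 nat) \<Rightarrow> bool"
  assumes monomial_order: "monomial_order ord"
begin

lemma ord_refl: "ord a a"
  using monomial_order unfolding monomial_order_def by blast

lemma ord_antisym: "ord a b \<Longrightarrow> ord b a \<Longrightarrow> a = b"
  using monomial_order unfolding monomial_order_def by blast

lemma ord_trans: "ord a b \<Longrightarrow> ord b c \<Longrightarrow> ord a c"
  using monomial_order unfolding monomial_order_def by blast

lemma ord_linear: "ord a b \<or> ord b a"
  using monomial_order unfolding monomial_order_def by blast

lemma ord_le_add: "ord a (a + d)"
proof -
  have "ord (0 + a) (d + a)"
    using monomial_order unfolding monomial_order_def by blast
  then show ?thesis by (simp add: add.commute)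
qed

lemma ord_add_left_mono:
  assumes "ord a b"
  shows "ord (c + a) (c + b)"
proof -
  have "ord (a + c) (b + c)"
    using assms monomial_order unfolding monomial_order_def by blast
  then show ?thesis by (simp add: add.commute)
qed

lemma ord_less_trans: "ord a b \<Longrightarrow> a \<noteq> b \<Longrightarrow> ord b c \<Longrightarrow> b \<noteq> c \<Longrightarrow> ord a c \<and> a \<noteq> c"
  using ord_trans ord_antisym by blast

lemma ex_ord_greatest:
  assumes "finite K" "K \<noteq> {}"
  shows "\<exists>m\<in>K. \<forall>k\<in>K. ord k m"
  using assms
proof (induction K rule: finite_ne_induct)
  case (singleton x)
  then show ?case using ord_refl by simp
next
  case (insert x F)
  then obtain m where m: "m \<in> F" "\<forall>k\<in>F. ord k m" by blast
  show ?case
  proof (cases "ord m x")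
    case True
    then show ?thesis using m ord_refl ord_trans by blast
  next
    case False
    then show ?thesis using m ord_linear by blast
  qed
qed

lemma lm_eqI:
  assumes "m \<in> Poly_Mapping.keys f" "\<And>k. k \<in> Poly_Mapping.keys f \<Longrightarrow> ord k m"
  shows "lm ord f = m"
  unfolding lm_def using assms ord_antisym by (intro the_equality) blast+

lemma lm_in_keys_and_greatest:
  assumes "f \<noteq> 0"
  shows "lm ord f \<in> Poly_Mapping.keys f \<and> (\<forall>k\<in>Poly_Mapping.keys f. ord k (lm ord f))"
proof -
  obtain m where "m \<in> Poly_Mapping.keys f" "\<forall>k\<in>Poly_Mapping.keys f. ord k m"
    using ex_ord_greatest[of "Poly_Mapping.keys f"] assms by auto
  moreover from this have "lm ord f = m" by (intro lm_eqI) auto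
  ultimately show ?thesis by simp
qed

lemma lm_in_keys: "f \<noteq> 0 \<Longrightarrow> lm ord f \<in> Poly_Mapping.keys f"
  using lm_in_keys_and_greatest by blast

lemma ord_lm: "k \<in> Poly_Mapping.keys f \<Longrightarrow> ord k (lm ord f)"
  using lm_in_keys_and_greatest[of f] by fastforce

lemma lc_nonzero: "f \<noteq> 0 \<Longrightarrow> lc ord f \<noteq> 0"
  using lm_in_keys unfolding lc_def by (simp add: in_keys_iff)

lemma lm_add_cases:
  fixes f g :: "('v, 'a::comm_monoid_add) mpoly"
  assumes "f \<noteq> 0" "g \<noteq> 0" "lm ord f \<noteq> lm ord g"
  shows "lm ord (f + g) = lm ord f \<or> lm ord (f + g) = lm ord g"
proof -
  have *: "lm ord (p + q) = lm ord p"
    if "p \<noteq> 0" "q \<noteq> 0" "lm ord p \<noteq> lm ord q" "ord (lm ord q) (lm ord p)" for p q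
  proof (rule lm_eqI)
    have "Poly_Mapping.lookup q (lm ord p) = 0"
      using that ord_lm ord_antisym by (metis in_keys_iff)
    then show "lm ord p \<in> Poly_Mapping.keys (p + q)"
      using lc_nonzero[OF \<open>p \<noteq> 0\<close>] by (simp add: lc_def in_keys_iff lookup_add)
    show "ord k (lm ord p)" if "k \<in> Poly_Mapping.keys (p + q)" for k
      using that keys_add[of p q] ord_lm ord_trans \<open>ord (lm ord q) (lm ord p)\<close> by blast
  qed
  show ?thesis
  proof (cases "ord (lm ord g) (lm ord f)")
    case True
    then show ?thesis using *[of f g] assms by simp
  next
    case False
    then have "ord (lm ord f) (lm ord g)" using ord_linear by blast
    then show ?thesis using *[of g f] assms by (simp add: add.commute[of g f])
  qed
qed

lemma lm_diff_less:
  fixes f g :: "('v, 'a::ab_group_add) mpoly"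
  assumes "f \<noteq> g" "lm ord f = lm ord g" "lc ord f = lc ord g"
  shows "ord (lm ord (f - g)) (lm ord f) \<and> lm ord (f - g) \<noteq> lm ord f"
proof -
  have "f - g \<noteq> 0" using assms(1) by simp
  moreover have "Poly_Mapping.lookup (f - g) (lm ord f) = 0"
    using assms(2,3) by (simp add: lc_def lookup_minus)
  moreover have "ord k (lm ord f)" if "k \<in> Poly_Mapping.keys (f - g)" for k
    using that keys_diff[of f g] ord_lm[of k f] ord_lm[of k g] assms(2) by auto
  ultimately show ?thesis using lm_in_keys[of "f - g"] by (auto simp: in_keys_iff)
qed

end

lemma lookup_single_mult:
  fixes g :: "('v, 'a::comm_semiring_1) mpoly"
  shows "Poly_Mapping.lookup (Poly_Mapping.single d c * g) (d + k) = c * Poly_Mapping.lookup g k"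
proof -
  have "Poly_Mapping.lookup (Poly_Mapping.single d c * g) (d + k)
      = (\<Sum>l. (c when d = l) * (\<Sum>q. Poly_Mapping.lookup g q when d + k = l + q))"
    by (simp add: lookup_mult lookup_single)
  also have "\<dots> = (\<Sum>l. (c * (\<Sum>q. Poly_Mapping.lookup g q when d + k = l + q)) when d = l)"
    by (simp add: when_mult)
  also have "\<dots> = c * Poly_Mapping.lookup g k"
    by simp
  finally show ?thesis .
qed

lemma keys_single_mult:
  fixes g :: "('v, 'a::idom) mpoly"
  assumes "c \<noteq> 0"
  shows "Poly_Mapping.keys (Poly_Mapping.single d c * g) = (\<lambda>k. d + k) ` Poly_Mapping.keys g"
proof
  show "Poly_Mapping.keys (Poly_Mapping.single d c * g) \<subseteq> (\<lambda>k. d + k) ` Poly_Mapping.keys g"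
    using keys_mult[of "Poly_Mapping.single d c" g] assms by auto
  show "(\<lambda>k. d + k) ` Poly_Mapping.keys g \<subseteq> Poly_Mapping.keys (Poly_Mapping.single d c * g)"
    using assms by (auto simp: in_keys_iff lookup_single_mult)
qed

context monomial_ord
begin

lemma lm_single_mult:
  fixes g :: "('v, 'a::idom) mpoly"
  assumes "c \<noteq> 0" "g \<noteq> 0"
  shows "lm ord (Poly_Mapping.single d c * g) = d + lm ord g"
proof (rule lm_eqI)
  show "d + lm ord g \<in> Poly_Mapping.keys (Poly_Mapping.single d c * g)"
    using keys_single_mult[OF assms(1)] lm_in_keys[OF assms(2)] by auto
  show "ord k (d + lm ord g)" if k: "k \<in> Poly_Mapping.keys (Poly_Mapping.single d c * g)" for k
  proof -
    obtain x where "x \<in> Poly_Mapping.keys g" "k = d + x"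
      using k keys_single_mult[OF assms(1), of d g] by auto
    then show ?thesis using ord_add_left_mono[OF ord_lm] by simp
  qed
qed

lemma lc_single_mult:
  fixes g :: "('v, 'a::idom) mpoly"
  assumes "c \<noteq> 0" "g \<noteq> 0"
  shows "lc ord (Poly_Mapping.single d c * g) = c * lc ord g"
  unfolding lc_def lm_single_mult[OF assms] lookup_single_mult ..

lemma spoly_of_lm_dvd:
  fixes g e :: "('v, 'a::field) mpoly"
  assumes "e \<noteq> 0" and dvd: "lm ord e = lm ord g + d"
  shows "Poly_Mapping.single 0 (- lc ord e) * spoly ord g e
    = e - Poly_Mapping.single d (lc ord e / lc ord g) * g"
proof -
  have "mon_lcm (lm ord g) (lm ord e) = lm ord e"
    unfolding mon_lcm_def dvd by simp
  then have "spoly ord g e = Poly_Mapping.single d (inverse (lc ord g)) * g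
      - Poly_Mapping.single 0 (inverse (lc ord e)) * e"
    unfolding spoly_def Let_def using dvd by simp
  then have "Poly_Mapping.single 0 (- lc ord e) * spoly ord g e
     = (Poly_Mapping.single 0 (- lc ord e) * Poly_Mapping.single d (inverse (lc ord g))) * g
       - (Poly_Mapping.single 0 (- lc ord e) * Poly_Mapping.single 0 (inverse (lc ord e))) * e"
    by (simp add: right_diff_distrib mult.assoc)
  also have "\<dots> = Poly_Mapping.single d (- (lc ord e / lc ord g)) * g - Poly_Mapping.single 0 (- 1) * e"
    unfolding mult_single using lc_nonzero[OF assms(1)] by (simp add: divide_inverse)
  also have "\<dots> = e - Poly_Mapping.single d (lc ord e / lc ord g) * g"
    by (simp add: single_uminus)
  finally show ?thesis .
qed

lemma lm_reduction_less:
  fixes g h :: "('v, 'a::field) mpoly"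
  assumes "g \<noteq> 0" "h \<noteq> 0" and dvd: "lm ord h = lm ord g + d"
    and "h \<noteq> Poly_Mapping.single d (lc ord h / lc ord g) * g"
  shows "ord (lm ord (h - Poly_Mapping.single d (lc ord h / lc ord g) * g)) (lm ord h)
    \<and> lm ord (h - Poly_Mapping.single d (lc ord h / lc ord g) * g) \<noteq> lm ord h"
proof (rule lm_diff_less)
  have c: "lc ord h / lc ord g \<noteq> 0"
    using lc_nonzero[OF assms(1)] lc_nonzero[OF assms(2)] by simp
  show "lm ord h = lm ord (Poly_Mapping.single d (lc ord h / lc ord g) * g)"
    using lm_single_mult[OF c assms(1)] dvd by (simp add: add.commute)
  show "lc ord h = lc ord (Poly_Mapping.single d (lc ord h / lc ord g) * g)"
    using lc_single_mult[OF c assms(1)] lc_nonzero[OF assms(1)] by simp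
qed (use assms(4) in blast)

end

section \<open>Ideals and initial ideals\<close>

lemma ideal_0: "is_ideal I \<Longrightarrow> 0 \<in> I"
  unfolding is_ideal_def by blast

lemma ideal_add: "is_ideal I \<Longrightarrow> f \<in> I \<Longrightarrow> g \<in> I \<Longrightarrow> f + g \<in> I"
  unfolding is_ideal_def by blast

lemma ideal_mult: "is_ideal I \<Longrightarrow> f \<in> I \<Longrightarrow> s * f \<in> I"
  unfolding is_ideal_def by blast

lemma ideal_diff:
  assumes "is_ideal I" "f \<in> I" "g \<in> I"
  shows "f - g \<in> I"
  using ideal_add[OF assms(1,2) ideal_mult[OF assms(1,3), of "- 1"]] by simp

lemma ideal_Int: "is_ideal I \<Longrightarrow> is_ideal J \<Longrightarrow> is_ideal (I \<inter> J)"
  unfolding is_ideal_def by blast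

lemma ideal_gen_ideal: "is_ideal (ideal_gen A)"
  unfolding is_ideal_def ideal_gen_def by blast

lemma ideal_gen_superset: "A \<subseteq> ideal_gen A"
  unfolding ideal_gen_def by blast

lemma ideal_gen_least: "is_ideal I \<Longrightarrow> A \<subseteq> I \<Longrightarrow> ideal_gen A \<subseteq> I"
  unfolding ideal_gen_def by blast

lemma ideal_sum_ideal:
  assumes "is_ideal I" "is_ideal J"
  shows "is_ideal (ideal_sum I J)"
  unfolding is_ideal_def ideal_sum_def
proof (intro conjI allI ballI)
  show "0 \<in> {f + g |f g. f \<in> I \<and> g \<in> J}"
    using ideal_0[OF assms(1)] ideal_0[OF assms(2)] by force
next
  fix p q assume "p \<in> {f + g |f g. f \<in> I \<and> g \<in> J}" "q \<in> {f + g |f g. f \<in> I \<and> g \<in> J}"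
  then obtain a b c d where "p = a + b" "q = c + d" "a \<in> I" "b \<in> J" "c \<in> I" "d \<in> J" by blast
  moreover have "a + b + (c + d) = (a + c) + (b + d)" by (simp add: algebra_simps)
  ultimately show "p + q \<in> {f + g |f g. f \<in> I \<and> g \<in> J}"
    using ideal_add[OF assms(1)] ideal_add[OF assms(2)] by blast
next
  fix s p assume "p \<in> {f + g |f g. f \<in> I \<and> g \<in> J}"
  then obtain a b where "p = a + b" "a \<in> I" "b \<in> J" by blast
  moreover have "s * (a + b) = s * a + s * b" by (simp add: algebra_simps)
  ultimately show "s * p \<in> {f + g |f g. f \<in> I \<and> g \<in> J}"
    using ideal_mult[OF assms(1)] ideal_mult[OF assms(2)] by blast
qed

lemma ideal_sum_left: "is_ideal J \<Longrightarrow> I \<subseteq> ideal_sum I J"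
  unfolding ideal_sum_def by (force dest: ideal_0)

lemma ideal_sum_right: "is_ideal I \<Longrightarrow> J \<subseteq> ideal_sum I J"
  unfolding ideal_sum_def by (force dest: ideal_0)

lemma ideal_sum_least: "is_ideal K \<Longrightarrow> I \<subseteq> K \<Longrightarrow> J \<subseteq> K \<Longrightarrow> ideal_sum I J \<subseteq> K"
  unfolding ideal_sum_def by (auto intro: ideal_add)

lemma ideal_sum_subset_Int:
  assumes "is_ideal J" "is_ideal E" "is_ideal E'"
  shows "ideal_sum J (E \<inter> E') \<subseteq> ideal_sum J E \<inter> ideal_sum J E'"
  by (intro ideal_sum_least ideal_Int ideal_sum_ideal assms)
    (use ideal_sum_left[OF assms(2)] ideal_sum_left[OF assms(3)]
      ideal_sum_right[OF assms(1), of E] ideal_sum_right[OF assms(1), of E'] in auto)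

lemma init_ideal_ideal: "is_ideal (init_ideal ord I)"
  unfolding init_ideal_def by (rule ideal_gen_ideal)

lemma monom_lm_in_init_ideal: "f \<in> I \<Longrightarrow> f \<noteq> 0 \<Longrightarrow> monom (lm ord f) \<in> init_ideal ord I"
  unfolding init_ideal_def by (rule ideal_gen_superset[THEN subsetD]) blast

lemma init_ideal_mono: "I \<subseteq> I' \<Longrightarrow> init_ideal ord I \<subseteq> init_ideal ord I'"
  unfolding init_ideal_def[of ord I]
  by (intro ideal_gen_least[OF init_ideal_ideal]) (auto intro: monom_lm_in_init_ideal)

text \<open>An ideal containing all monomials x^a, a \<in> A, whose explicit description shows that a monomial
  in the ideal generated by them is divisible by one of them.\<close>
definition polys_supported_on_multiples :: "('v \<Rightarrow>\<^sub>0 nat) set \<Rightarrow> ('v, 'a::comm_ring_1) mpoly set" where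
  "polys_supported_on_multiples A = {p. \<forall>k\<in>Poly_Mapping.keys p. \<exists>a\<in>A. \<exists>d. k = a + d}"

lemma ideal_polys_supported_on_multiples: "is_ideal (polys_supported_on_multiples A)"
  unfolding is_ideal_def
proof (intro conjI allI ballI)
  show "0 \<in> polys_supported_on_multiples A"
    unfolding polys_supported_on_multiples_def by simp
  show "f + g \<in> polys_supported_on_multiples A"
    if "f \<in> polys_supported_on_multiples A" "g \<in> polys_supported_on_multiples A" for f g
    using that keys_add[of f g] unfolding polys_supported_on_multiples_def by blast
  show "s * f \<in> polys_supported_on_multiples A" if f: "f \<in> polys_supported_on_multiples A" for s f
    unfolding polys_supported_on_multiples_def
  proof (intro CollectI ballI)
    fix k assume "k \<in> Poly_Mapping.keys (s * f)"
    then obtain b c where "k = b + c" "c \<in> Poly_Mapping.keys f"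
      using keys_mult[of s f] by blast
    moreover from f this(2) obtain a d where "a \<in> A" "c = a + d"
      unfolding polys_supported_on_multiples_def by blast
    ultimately show "\<exists>a\<in>A. \<exists>d. k = a + d"
      by (metis add.left_commute)
  qed
qed

lemma monom_in_ideal_gen_monoms:
  assumes "(monom m :: ('v, 'a::comm_ring_1) mpoly) \<in> ideal_gen {monom (\<phi> x) | x. P x}"
  shows "\<exists>x. P x \<and> (\<exists>d. m = \<phi> x + d)"
proof -
  have "ideal_gen {monom (\<phi> x) | x. P x} \<subseteq> (polys_supported_on_multiples {\<phi> x | x. P x} :: ('v, 'a) mpoly set)"
    by (intro ideal_gen_least ideal_polys_supported_on_multiples)
      (auto simp: polys_supported_on_multiples_def monom_def)
  with assms have "\<exists>a\<in>{\<phi> x | x. P x}. \<exists>d. m = a + d"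
    unfolding polys_supported_on_multiples_def monom_def by auto
  then show ?thesis by blast
qed

lemma monom_add: "(monom (a + b) :: ('v, 'a::comm_ring_1) mpoly) = monom a * monom b"
  unfolding monom_def mult_single by simp

lemma monom_in_init_ideal_iff:
  "(monom m :: ('v, 'a::comm_ring_1) mpoly) \<in> init_ideal ord I
    \<longleftrightarrow> (\<exists>f\<in>I. f \<noteq> 0 \<and> (\<exists>d. m = lm ord f + d))"
proof
  show "monom m \<in> init_ideal ord I" if "\<exists>f\<in>I. f \<noteq> 0 \<and> (\<exists>d. m = lm ord f + d)"
  proof -
    from that obtain f d where "f \<in> I" "f \<noteq> 0" "m = lm ord f + d" by blast
    moreover have "monom d * monom (lm ord f) \<in> init_ideal ord I"
      by (rule ideal_mult[OF init_ideal_ideal monom_lm_in_init_ideal[OF \<open>f \<in> I\<close> \<open>f \<noteq> 0\<close>]])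
    ultimately show ?thesis by (simp add: monom_add add.commute)
  qed
qed (use monom_in_ideal_gen_monoms[of m "lm ord" "\<lambda>f. f \<in> I \<and> f \<noteq> 0"] in \<open>auto simp: init_ideal_def\<close>)

lemma groebner_basis_lm_dvd:
  fixes G J :: "('v, 'a::comm_ring_1) mpoly set"
  assumes "groebner_basis ord G J" "f \<in> J" "f \<noteq> 0"
  shows "\<exists>g\<in>G. \<exists>d. lm ord f = lm ord g + d"
proof -
  have "(monom (lm ord f) :: ('v, 'a) mpoly) \<in> ideal_gen {monom (lm ord g) | g. g \<in> G}"
    using monom_lm_in_init_ideal[OF assms(2,3), of ord] assms(1) unfolding groebner_basis_def by simp
  then show ?thesis using monom_in_ideal_gen_monoms[of "lm ord f" "lm ord" "\<lambda>g. g \<in> G"] by blast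
qed

lemma S_nice_Int: "S_nice ord G E \<Longrightarrow> S_nice ord G E' \<Longrightarrow> S_nice ord G (E \<inter> E')"
  unfolding S_nice_def by blast

section \<open>Dickson's lemma and well-foundedness\<close>

lemma nat_seq_has_incseq_subseq:
  fixes g :: "nat \<Rightarrow> nat"
  obtains r where "strict_mono r" "incseq (g \<circ> r)"
proof -
  obtain s where s: "strict_mono s" "monoseq (\<lambda>n. g (s n))"
    using seq_monosub[of g] by blast
  show ?thesis
  proof (cases "incseq (g \<circ> s)")
    case True
    then show ?thesis using that s(1) by blast
  next
    case False
    then have dec: "decseq (\<lambda>n. g (s n))"
      using s(2) monoseq_iff by (auto simp: o_def)
    obtain N where N: "\<forall>n. g (s N) \<le> g (s n)"
      using ex_has_least_nat[of "\<lambda>_. True" 0 "\<lambda>n. g (s n)"] by blast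
    have "g (s (n + N)) = g (s N)" for n
      using decseqD[OF dec, of N "n + N"] N by (simp add: antisym)
    then have "incseq (g \<circ> (s \<circ> (\<lambda>n. n + N)))"
      by (simp add: incseq_def)
    moreover have "strict_mono (s \<circ> (\<lambda>n. n + N))"
      using s(1) by (simp add: strict_mono_def)
    ultimately show ?thesis using that by blast
  qed
qed

lemma dickson_subseq:
  fixes f :: "nat \<Rightarrow> ('v \<Rightarrow>\<^sub>0 nat)"
  assumes "finite V"
  shows "\<exists>r. strict_mono r \<and> (\<forall>v\<in>V. incseq (\<lambda>i. Poly_Mapping.lookup (f (r i)) v))"
  using assms
proof (induction V rule: finite_induct)
  case empty
  then show ?case using strict_mono_id by blast
next
  case (insert x V)
  then obtain r where r: "strict_mono r" "\<forall>v\<in>V. incseq (\<lambda>i. Poly_Mapping.lookup (f (r i)) v)"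
    by blast
  obtain s where s: "strict_mono s" "incseq ((\<lambda>i. Poly_Mapping.lookup (f (r i)) x) \<circ> s)"
    by (rule nat_seq_has_incseq_subseq)
  have "incseq (\<lambda>i. Poly_Mapping.lookup (f (r (s i))) v)" if "v \<in> V" for v
    using r(2) that s(1) by (auto simp: incseq_def strict_mono_less_eq)
  then show ?case
    using strict_mono_o[OF r(1) s(1)] s(2) by (intro exI[of _ "r \<circ> s"]) (auto simp: o_def)
qed

locale finite_monomial_ord = monomial_ord ord
  for ord :: "('v::finite \<Rightarrow>\<^sub>0 nat) \<Rightarrow> ('v \<Rightarrow>\<^sub>0 nat) \<Rightarrow> bool"
begin

lemma wf_ord_strict: "wf {(a, b). ord a b \<and> a \<noteq> b}"
proof (rule ccontr)
  assume "\<not> ?thesis"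
  then obtain f where f: "\<And>i. ord (f (Suc i)) (f i) \<and> f (Suc i) \<noteq> f i"
    unfolding wf_iff_no_infinite_down_chain by auto
  have chain: "ord (f j) (f i) \<and> f j \<noteq> f i" if "i < j" for i j
    using that by (induction i j rule: less_Suc_induct) (use f ord_less_trans in blast)+
  obtain r where r: "strict_mono r" "\<forall>v. incseq (\<lambda>i. Poly_Mapping.lookup (f (r i)) v)"
    using dickson_subseq[where f = f, OF finite_UNIV] by auto
  have "f (r 1) = f (r 0) + (f (r 1) - f (r 0))"
    by (rule poly_mapping_eqI) (use r(2) in \<open>simp add: lookup_add lookup_minus incseq_def\<close>)
  then have "ord (f (r 0)) (f (r 1))"
    using ord_le_add by metis
  moreover have "ord (f (r 1)) (f (r 0)) \<and> f (r 1) \<noteq> f (r 0)"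
    using chain r(1) by (simp add: strict_mono_def)
  ultimately show False
    using ord_antisym by blast
qed

section \<open>Initial ideal of J + D for S-nice D\<close>

lemma S_nice_reduction:
  fixes J D G :: "('v, 'a::field) mpoly set"
  assumes J: "is_ideal J" and D: "is_ideal D" and gb: "groebner_basis ord G J"
    and nice: "S_nice ord G D" and "e \<in> D"
  shows "\<exists>j e'. j \<in> J \<and> e' \<in> D \<and> e = j + e' \<and>
    (e' \<noteq> 0 \<longrightarrow> (\<forall>g\<in>G. \<forall>d. lm ord e' \<noteq> lm ord g + d))"
  using \<open>e \<in> D\<close>
proof (induction "lm ord e" arbitrary: e rule: wf_induct_rule[OF wf_ord_strict, case_names less])
  case less
  show ?case
  proof (cases "e \<noteq> 0 \<and> (\<exists>g\<in>G. \<exists>d. lm ord e = lm ord g + d)")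
    case False
    then show ?thesis
      using ideal_0[OF J] \<open>e \<in> D\<close> by (intro exI[of _ 0] exI[of _ e]) auto
  next
    case True
    then obtain g d where "e \<noteq> 0" "g \<in> G" and dvd: "lm ord e = lm ord g + d"
      by blast
    have "g \<in> J" "g \<noteq> 0"
      using \<open>g \<in> G\<close> gb unfolding groebner_basis_def by auto
    define t where "t = Poly_Mapping.single d (lc ord e / lc ord g) * g"
    have "t \<in> J"
      unfolding t_def by (rule ideal_mult[OF J \<open>g \<in> J\<close>])
    have "spoly ord g e \<in> D"
      using nice \<open>g \<in> G\<close> \<open>e \<in> D\<close> \<open>e \<noteq> 0\<close> unfolding S_nice_def by blast
    then have "e - t \<in> D"
      using ideal_mult[OF D, of "spoly ord g e" "Poly_Mapping.single 0 (- lc ord e)"]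
      unfolding t_def spoly_of_lm_dvd[OF \<open>e \<noteq> 0\<close> dvd] by simp
    show ?thesis
    proof (cases "e = t")
      case True
      then show ?thesis
        using \<open>t \<in> J\<close> ideal_0[OF D] by (intro exI[of _ e] exI[of _ 0]) auto
    next
      case False
      then have "ord (lm ord (e - t)) (lm ord e) \<and> lm ord (e - t) \<noteq> lm ord e"
        unfolding t_def by (rule lm_reduction_less[OF \<open>g \<noteq> 0\<close> \<open>e \<noteq> 0\<close> dvd])
      then obtain j e' where "j \<in> J" "e' \<in> D" "e - t = j + e'"
        and "e' \<noteq> 0 \<longrightarrow> (\<forall>g\<in>G. \<forall>d. lm ord e' \<noteq> lm ord g + d)"
        using less.hyps \<open>e - t \<in> D\<close> by blast
      moreover have "e = (t + j) + e'"
        using \<open>e - t = j + e'\<close> by (simp add: algebra_simps)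
      ultimately show ?thesis
        using ideal_add[OF J \<open>t \<in> J\<close> \<open>j \<in> J\<close>] by blast
    qed
  qed
qed

lemma lm_ideal_sum_dvd:
  fixes J D G :: "('v, 'a::field) mpoly set"
  assumes J: "is_ideal J" and D: "is_ideal D" and gb: "groebner_basis ord G J"
    and nice: "S_nice ord G D" and "h \<in> ideal_sum J D" "h \<noteq> 0"
  shows "(\<exists>g\<in>J. g \<noteq> 0 \<and> (\<exists>d. lm ord h = lm ord g + d))
    \<or> (\<exists>e\<in>D. e \<noteq> 0 \<and> (\<exists>d. lm ord h = lm ord e + d))"
proof -
  obtain j0 e where "h = j0 + e" "j0 \<in> J" "e \<in> D"
    using \<open>h \<in> ideal_sum J D\<close> unfolding ideal_sum_def by blast
  moreover obtain j e' where "j \<in> J" "e' \<in> D" "e = j + e'"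
    and irreducible: "e' \<noteq> 0 \<longrightarrow> (\<forall>g\<in>G. \<forall>d. lm ord e' \<noteq> lm ord g + d)"
    using S_nice_reduction[OF J D gb nice \<open>e \<in> D\<close>] by blast
  ultimately obtain j' where "j' \<in> J" "h = j' + e'"
    using ideal_add[OF J] by (metis add.assoc)
  consider "e' = 0" | "j' = 0" | "e' \<noteq> 0" "j' \<noteq> 0" by blast
  then show ?thesis
  proof cases
    case 1
    then show ?thesis using \<open>j' \<in> J\<close> \<open>h = j' + e'\<close> \<open>h \<noteq> 0\<close> by (metis add_0 add.right_neutral)
  next
    case 2
    then show ?thesis using \<open>e' \<in> D\<close> \<open>h = j' + e'\<close> \<open>h \<noteq> 0\<close> by (metis add_0 add.right_neutral)
  next
    case 3
    obtain g d where "g \<in> G" "lm ord j' = lm ord g + d"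
      using groebner_basis_lm_dvd[OF gb \<open>j' \<in> J\<close> \<open>j' \<noteq> 0\<close>] by blast
    then have "lm ord j' \<noteq> lm ord e'"
      using irreducible 3 by metis
    then have "lm ord h = lm ord j' \<or> lm ord h = lm ord e'"
      using lm_add_cases[of j' e'] 3 \<open>h = j' + e'\<close> by blast
    then show ?thesis
      using \<open>j' \<in> J\<close> \<open>e' \<in> D\<close> 3 by (metis add.right_neutral)
  qed
qed

lemma init_ideal_ideal_sum:
  fixes J D G :: "('v, 'a::field) mpoly set"
  assumes J: "is_ideal J" and D: "is_ideal D" and gb: "groebner_basis ord G J"
    and nice: "S_nice ord G D"
  shows "init_ideal ord (ideal_sum J D) = ideal_sum (init_ideal ord J) (init_ideal ord D)"
proof
  show "ideal_sum (init_ideal ord J) (init_ideal ord D) \<subseteq> init_ideal ord (ideal_sum J D)"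
    using init_ideal_mono[OF ideal_sum_left[OF D]] init_ideal_mono[OF ideal_sum_right[OF J]]
    by (intro ideal_sum_least init_ideal_ideal)
  have "monom (lm ord h) \<in> ideal_sum (init_ideal ord J) (init_ideal ord D)"
    if "h \<in> ideal_sum J D" "h \<noteq> 0" for h
  proof -
    have "monom (lm ord h) \<in> init_ideal ord J \<or> monom (lm ord h) \<in> init_ideal ord D"
      using lm_ideal_sum_dvd[OF J D gb nice that] unfolding monom_in_init_ideal_iff .
    then show ?thesis
      using ideal_sum_left[OF init_ideal_ideal] ideal_sum_right[OF init_ideal_ideal] by blast
  qed
  then show "init_ideal ord (ideal_sum J D) \<subseteq> ideal_sum (init_ideal ord J) (init_ideal ord D)"
    unfolding init_ideal_def[of ord "ideal_sum J D"]
    by (intro ideal_gen_least ideal_sum_ideal init_ideal_ideal) blast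
qed

lemma subset_if_init_ideal_subset:
  fixes I I' :: "('v, 'a::field) mpoly set"
  assumes I: "is_ideal I" and I': "is_ideal I'" and "I \<subseteq> I'"
    and init: "init_ideal ord I' \<subseteq> init_ideal ord I"
  shows "I' \<subseteq> I"
proof (rule ccontr)
  assume "\<not> I' \<subseteq> I"
  then have "lm ord ` (I' - I) \<noteq> {}" by blast
  then obtain z where z: "z \<in> lm ord ` (I' - I)"
    and minimal: "\<And>y. (y, z) \<in> {(a, b). ord a b \<and> a \<noteq> b} \<Longrightarrow> y \<notin> lm ord ` (I' - I)"
    by (rule wfE_min'[OF wf_ord_strict]) blast
  from z obtain h where h: "h \<in> I'" "h \<notin> I" "z = lm ord h" by blast
  have "h \<noteq> 0" using h ideal_0[OF I] by auto
  have "monom (lm ord h) \<in> init_ideal ord I"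
    using init monom_lm_in_init_ideal[OF h(1) \<open>h \<noteq> 0\<close>] by blast
  then obtain g d where "g \<in> I" "g \<noteq> 0" and dvd: "lm ord h = lm ord g + d"
    unfolding monom_in_init_ideal_iff by blast
  define t where "t = Poly_Mapping.single d (lc ord h / lc ord g) * g"
  have "t \<in> I"
    unfolding t_def by (rule ideal_mult[OF I \<open>g \<in> I\<close>])
  have "h \<noteq> t"
    using h(2) \<open>t \<in> I\<close> by blast
  then have "(lm ord (h - t), z) \<in> {(a, b). ord a b \<and> a \<noteq> b}"
    using lm_reduction_less[OF \<open>g \<noteq> 0\<close> \<open>h \<noteq> 0\<close> dvd] h(3) unfolding t_def by simp
  moreover have "h - t \<in> I'"
    using ideal_diff[OF I' h(1)] \<open>t \<in> I\<close> \<open>I \<subseteq> I'\<close> by blast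
  moreover have "h - t \<notin> I"
    using ideal_add[OF I, of "h - t" t] \<open>t \<in> I\<close> h(2) by auto
  ultimately show False
    using minimal by blast
qed

end

theorem mainTheorem17:
  fixes ord :: "('v::finite \<Rightarrow>\<^sub>0 nat) \<Rightarrow> ('v \<Rightarrow>\<^sub>0 nat) \<Rightarrow> bool"
    and J E E' G :: "('v, 'a::field) mpoly set"
  assumes "monomial_order ord"
    and "is_ideal J" and "is_ideal E" and "is_ideal E'"
    and "groebner_basis ord G J"
    and "S_nice ord G E" and "S_nice ord G E'"
  shows "ideal_sum J E \<inter> ideal_sum J E' = ideal_sum J (E \<inter> E') \<longleftrightarrow>
         init_ideal ord (ideal_sum J E \<inter> ideal_sum J E') =
           ideal_sum (init_ideal ord J) (init_ideal ord (E \<inter> E'))"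
proof -
  interpret finite_monomial_ord ord
    by unfold_locales (rule assms(1))
  have D: "is_ideal (E \<inter> E')"
    using assms(3,4) by (rule ideal_Int)
  have init_sum: "init_ideal ord (ideal_sum J (E \<inter> E'))
      = ideal_sum (init_ideal ord J) (init_ideal ord (E \<inter> E'))"
    using init_ideal_ideal_sum[OF assms(2) D assms(5) S_nice_Int[OF assms(6,7)]] .
  have sub: "ideal_sum J (E \<inter> E') \<subseteq> ideal_sum J E \<inter> ideal_sum J E'"
    using ideal_sum_subset_Int[OF assms(2-4)] .
  have sup: "ideal_sum J E \<inter> ideal_sum J E' \<subseteq> ideal_sum J (E \<inter> E')"
    if "init_ideal ord (ideal_sum J E \<inter> ideal_sum J E') = init_ideal ord (ideal_sum J (E \<inter> E'))"
    by (rule subset_if_init_ideal_subset[OF ideal_sum_ideal[OF assms(2) D]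
        ideal_Int[OF ideal_sum_ideal[OF assms(2,3)] ideal_sum_ideal[OF assms(2,4)]] sub])
      (use that in simp)
  show ?thesis
    unfolding init_sum[symmetric] using sub sup by (auto intro: subset_antisym)
qed

end
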